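(* Let $\gamma>0$ and $f\in C_c^\infty(\mathbb{R}^2)$. Then for every $1\le p\le\infty$, $\|T_\gamma f\|_{L^p}\le\|f\|_{L^p}$, where $T_\gamma$ is either $\ln^{-\gamma}(e-\Delta)$ or $\ln^{-\gamma}(e+|\nabla|)$.
   Context: $\ln^{-\gamma}(e-\Delta)$ and $\ln^{-\gamma}(e+|\nabla|)$ are the Fourier multipliers with symbols $\ln^{-\gamma}(e+|k|^2)$ and $\ln^{-\gamma}(e+|k|)$ respectively. *)

theory Defs
  imports "HOL-Analysis.Analysis" "HOL-Probability.Essential_Supremum"
begin

fun Ck2 :: "nat \<Rightarrow> (real^2 \<Rightarrow> complex) \<Rightarrow> bool" where
  "Ck2 0 f = continuous_on UNIV f"
| "Ck2 (Suc n) f = (continuous_on UNIV f \<and>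
     (\<forall>i::2. \<exists>g. (\<forall>x. ((\<lambda>t. f (x + t *\<^sub>R axis i 1)) has_vector_derivative g x) (at 0))
                 \<and> Ck2 n g))"

definition smooth2 :: "(real^2 \<Rightarrow> complex) \<Rightarrow> bool" where
  "smooth2 f = (\<forall>k. Ck2 k f)"

definition Cc_inf2 :: "(real^2 \<Rightarrow> complex) \<Rightarrow> bool" where
  "Cc_inf2 f = (smooth2 f \<and> compact (closure {x. f x \<noteq> 0}))"

definition fourier2 :: "(real^2 \<Rightarrow> complex) \<Rightarrow> real^2 \<Rightarrow> complex" where
  "fourier2 f k = (\<integral>x. exp (- \<i> * complex_of_real (k \<bullet> x)) * f x \<partial>lborel)"

definition fourier_multiplier2 :: "(real^2 \<Rightarrow> real) \<Rightarrow> (real^2 \<Rightarrow> complex) \<Rightarrow> real^2 \<Rightarrow> complex" where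
  "fourier_multiplier2 m f x =
     complex_of_real (1 / (2 * pi)^2) *
     (\<integral>k. exp (\<i> * complex_of_real (k \<bullet> x)) * complex_of_real (m k) * fourier2 f k \<partial>lborel)"

text \<open>ln^{-gamma}(e - Laplacian): symbol ln^{-gamma}(e + |k|^2)\<close>
definition log_lap_symbol :: "real \<Rightarrow> real^2 \<Rightarrow> real" where
  "log_lap_symbol \<gamma> k = ln (exp 1 + (norm k)^2) powr (- \<gamma>)"

text \<open>ln^{-gamma}(e + |nabla|): symbol ln^{-gamma}(e + |k|)\<close>
definition log_grad_symbol :: "real \<Rightarrow> real^2 \<Rightarrow> real" where
  "log_grad_symbol \<gamma> k = ln (exp 1 + norm k) powr (- \<gamma>)"

definition Lp_norm2 :: "ennreal \<Rightarrow> (real^2 \<Rightarrow> complex) \<Rightarrow> ennreal" where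
  "Lp_norm2 p f =
     (if p = \<infinity> then esssup lborel (\<lambda>x. ennreal (norm (f x)))
      else (let I = (\<integral>\<^sup>+ x. ennreal (norm (f x) powr (enn2real p)) \<partial>lborel) in
            if I = \<infinity> then \<infinity> else ennreal (enn2real I powr (1 / enn2real p))))"

end

(*
  Both symbols are Gaussian mixtures m(k) = E exp (- T |k|^2) for a positive random time T.
  For the logarithm, two Gamma integrals give
    ln (e + s) powr (- gamma) = int int u^(gamma - 1) / Gamma gamma * tau^(u - 1) exp (- e tau) / Gamma u
                                        * exp (- tau s) dtau du,
  and the subordination identity exp (- tau r) = int levy_density tau sigma * exp (- sigma r^2) dsigma
  turns this Laplace mixture in r = |k| into a Gaussian mixture in |k|^2. The multiplier of a
  Gaussian mixture is the average over T of the heat semigroup exp (T Laplacian), i.e. of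
  convolutions with probability densities; by Jensen's inequality each of them, and hence their
  average, is a contraction on every L^p.
*)
theory Submission
  imports Defs "HOL-Probability.Probability"
begin

section \<open>Gaussian integrals\<close>

lemma fourier_gaussian_real:
  fixes v z :: real assumes v: "v > 0"
  shows "integrable lborel (\<lambda>\<xi>. exp (\<i> * complex_of_real (\<xi> * z)) * complex_of_real (exp (- v * \<xi>\<^sup>2)))"
    and "(\<integral>\<xi>. exp (\<i> * complex_of_real (\<xi> * z)) * complex_of_real (exp (- v * \<xi>\<^sup>2)) \<partial>lborel)
        = complex_of_real (sqrt (pi / v) * exp (- z\<^sup>2 / (4 * v)))"
proof -
  define c where "c = sqrt (2 * v)"
  have c: "c > 0" using v by (simp add: c_def)
  have c2: "c\<^sup>2 = 2 * v" using v by (simp add: c_def)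
  define t where "t = z / c"
  (* the characteristic function of the standard normal distribution, rescaled by c *)
  let ?g = "\<lambda>x. std_normal_density x *\<^sub>R iexp (t * x)"
  have ig: "integrable lborel ?g"
    by (rule Bochner_Integration.integrable_bound[where f="std_normal_density"])
       (auto simp: norm_mult)
  have char: "(\<integral>x. ?g x \<partial>lborel) = complex_of_real (exp (- (t^2) / 2))"
    using fun_cong[OF char_std_normal_distribution, of t]
    by (simp add: char_def integral_density)
  let ?h = "\<lambda>\<xi>. exp (\<i> * complex_of_real (\<xi> * z)) * complex_of_real (exp (- v * \<xi>\<^sup>2))"
  have gh: "?g (0 + c * \<xi>) = complex_of_real (1 / sqrt (2 * pi)) * ?h \<xi>" for \<xi>
  proof -
    have "t * (c * \<xi>) = \<xi> * z" using c by (simp add: t_def)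
    hence e1: "iexp (t * (c * \<xi>)) = exp (\<i> * complex_of_real (\<xi> * z))" by metis
    have "- (c * \<xi>)\<^sup>2 / 2 = - v * \<xi>\<^sup>2" using c2 by (simp add: power_mult_distrib)
    hence e2: "exp (- (c * \<xi>)\<^sup>2 / 2) = exp (- v * \<xi>\<^sup>2)" by metis
    show ?thesis
      unfolding std_normal_density_def scaleR_conv_of_real add_0 e1 e2[symmetric]
      by (simp add: mult_ac)
  qed
  have ih: "integrable lborel (\<lambda>\<xi>. ?g (0 + c * \<xi>))"
    using lborel_integrable_real_affine[OF ig, of c 0] c by simp
  hence "integrable lborel (\<lambda>\<xi>. complex_of_real (sqrt (2 * pi)) * ?g (0 + c * \<xi>))"
    by (rule integrable_mult_right)
  moreover have "complex_of_real (sqrt (2 * pi)) * ?g (0 + c * \<xi>) = ?h \<xi>" for \<xi>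
    unfolding gh by (simp add: of_real_mult[symmetric] del: of_real_mult)
  ultimately show "integrable lborel ?h" by simp
  have "(\<integral>x. ?g x \<partial>lborel) = c *\<^sub>R (\<integral>\<xi>. ?g (0 + c * \<xi>) \<partial>lborel)"
    using lborel_integral_real_affine[of c ?g 0] c by simp
  also have "\<dots> = complex_of_real (c / sqrt (2 * pi)) * (\<integral>\<xi>. ?h \<xi> \<partial>lborel)"
    unfolding gh by (simp add: scaleR_conv_of_real)
  finally have "(\<integral>\<xi>. ?h \<xi> \<partial>lborel) = complex_of_real (sqrt (2 * pi) / c * exp (- (t^2) / 2))"
    using c char by (simp add: field_simps)
  also have "sqrt (2 * pi) / c = sqrt (pi / v)"
    using v by (simp add: c_def real_sqrt_divide[symmetric])
  also have "- (t^2) / 2 = - z\<^sup>2 / (4 * v)"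
    using c2 v by (simp add: t_def power_divide)
  finally show "(\<integral>\<xi>. ?h \<xi> \<partial>lborel) = complex_of_real (sqrt (pi / v) * exp (- z\<^sup>2 / (4 * v)))" .
qed

lemma integral_prod_Basis_lborel:
  fixes f :: "'a::euclidean_space \<Rightarrow> real \<Rightarrow> complex"
  assumes f: "\<And>b. b \<in> Basis \<Longrightarrow> integrable lborel (f b)"
  shows "integrable (lborel::'a measure) (\<lambda>x. \<Prod>b\<in>Basis. f b (x \<bullet> b))"
    and "(\<integral>x. (\<Prod>b\<in>Basis. f b (x \<bullet> b)) \<partial>(lborel::'a measure))
        = (\<Prod>b\<in>Basis. (\<integral>x. f b x \<partial>lborel))"
proof -
  interpret product_sigma_finite "\<lambda>_::'a. lborel :: real measure" by standard
  let ?F = "\<lambda>x::'a. \<Prod>b\<in>Basis. f b (x \<bullet> b)"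
  have m: "?F \<in> borel_measurable lborel"
    using f by (intro borel_measurable_prod)
      (auto intro!: measurable_compose[OF _ borel_measurable_integrable] borel_measurable_inner)
  have coords: "?F (\<Sum>b\<in>Basis. x b *\<^sub>R b) = (\<Prod>b\<in>Basis. f b (x b))" for x
    by (intro prod.cong) (simp_all add: inner_sum_left inner_Basis if_distrib cong: if_cong)
  have "integrable (\<Pi>\<^sub>M b\<in>Basis. lborel) (\<lambda>x. \<Prod>b\<in>Basis. f b (x b))"
    using f by (intro product_integrable_prod) auto
  thus "integrable lborel ?F"
    using m by (subst lborel_eq, subst integrable_distr_eq) (simp_all add: coords)
  have "(\<integral>x. ?F x \<partial>lborel) = (\<integral>x. (\<Prod>b\<in>Basis. f b (x b)) \<partial>(\<Pi>\<^sub>M b\<in>Basis. lborel))"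
    using m by (subst lborel_eq, subst integral_distr) (simp_all add: coords)
  also have "\<dots> = (\<Prod>b\<in>Basis. (\<integral>x. f b x \<partial>lborel))"
    using f by (subst product_integral_prod) (auto simp: product_integral_singleton)
  finally show "(\<integral>x. ?F x \<partial>lborel) = (\<Prod>b\<in>Basis. (\<integral>x. f b x \<partial>lborel))" .
qed

lemma fourier_gaussian:
  fixes z :: "'a::euclidean_space" and v :: real assumes v: "v > 0"
  shows "integrable lborel (\<lambda>k::'a. exp (\<i> * complex_of_real (k \<bullet> z)) * complex_of_real (exp (- v * (norm k)\<^sup>2)))"
    and "(\<integral>k. exp (\<i> * complex_of_real (k \<bullet> z)) * complex_of_real (exp (- v * (norm k)\<^sup>2)) \<partial>lborel)
        = complex_of_real (sqrt (pi / v) ^ DIM('a) * exp (- (norm z)\<^sup>2 / (4 * v)))"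
proof -
  let ?f = "\<lambda>b \<xi>. exp (\<i> * complex_of_real (\<xi> * (z \<bullet> b))) * complex_of_real (exp (- v * \<xi>\<^sup>2))"
  have norm2: "(norm x)\<^sup>2 = (\<Sum>b\<in>Basis. (x \<bullet> b)\<^sup>2)" for x :: 'a
    unfolding power2_norm_eq_inner by (subst euclidean_inner) (simp add: power2_eq_square)
  have eq: "exp (\<i> * complex_of_real (k \<bullet> z)) * complex_of_real (exp (- v * (norm k)\<^sup>2))
      = (\<Prod>b\<in>Basis. ?f b (k \<bullet> b))" for k :: 'a
    using euclidean_inner[of k z] norm2[of k]
    by (simp add: prod.distrib sum_distrib_left ring_distribs exp_sum[symmetric] of_real_sum
        exp_of_real[symmetric] sum_negf)
  have int: "integrable lborel (?f b)" for b
    by (rule fourier_gaussian_real(1)[OF v])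
  show "integrable lborel (\<lambda>k::'a. exp (\<i> * complex_of_real (k \<bullet> z)) * complex_of_real (exp (- v * (norm k)\<^sup>2)))"
    unfolding eq by (rule integral_prod_Basis_lborel(1)[OF int])
  have "(\<integral>k. exp (\<i> * complex_of_real (k \<bullet> z)) * complex_of_real (exp (- v * (norm k)\<^sup>2)) \<partial>lborel)
      = (\<Prod>b\<in>Basis. (\<integral>\<xi>. ?f b \<xi> \<partial>lborel))"
    unfolding eq by (rule integral_prod_Basis_lborel(2)[OF int])
  also have "\<dots> = (\<Prod>b\<in>(Basis::'a set). complex_of_real (sqrt (pi / v) * exp (- (z \<bullet> b)\<^sup>2 / (4 * v))))"
    by (intro prod.cong refl fourier_gaussian_real(2)[OF v])
  also have "\<dots> = complex_of_real (sqrt (pi / v) ^ DIM('a) * exp (- (norm z)\<^sup>2 / (4 * v)))"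
  proof -
    have "exp (- (norm z)\<^sup>2 / (4 * v)) = (\<Prod>b\<in>(Basis::'a set). exp (- (z \<bullet> b)\<^sup>2 / (4 * v)))"
      unfolding norm2 by (simp add: exp_sum[symmetric] sum_divide_distrib[symmetric] sum_negf)
    thus ?thesis by (simp add: prod.distrib of_real_prod)
  qed
  finally show "(\<integral>k. exp (\<i> * complex_of_real (k \<bullet> z)) * complex_of_real (exp (- v * (norm k)\<^sup>2)) \<partial>lborel)
      = complex_of_real (sqrt (pi / v) ^ DIM('a) * exp (- (norm z)\<^sup>2 / (4 * v)))" .
qed

lemma gaussian_integrable:
  "t > 0 \<Longrightarrow> integrable lborel (\<lambda>k::'a::euclidean_space. exp (- t * (norm k)\<^sup>2))"
  using fourier_gaussian(1)[of t "0::'a"] by (simp add: complex_of_real_integrable_eq)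

section \<open>The heat kernel\<close>

definition heat_kernel :: "real \<Rightarrow> real^2 \<Rightarrow> real" where
  "heat_kernel t z = exp (- (norm z)\<^sup>2 / (4 * t)) / (4 * pi * t)"

lemma heat_kernel_nonneg: "t \<ge> 0 \<Longrightarrow> heat_kernel t z \<ge> 0"
  by (simp add: heat_kernel_def)

lemma heat_kernel_diff_commute: "heat_kernel t (x - y) = heat_kernel t (y - x)"
  by (simp add: heat_kernel_def norm_minus_commute)

lemma heat_kernel_measurable[measurable]:
  assumes [measurable]: "f \<in> borel_measurable M" "g \<in> borel_measurable M"
  shows "(\<lambda>x. heat_kernel (f x) (g x)) \<in> borel_measurable M"
  unfolding heat_kernel_def by measurable

lemma has_bochner_integral_heat_kernel:
  assumes t: "t > 0"
  shows "has_bochner_integral lborel (heat_kernel t) 1"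
proof -
  have v: "1 / (4 * t) > 0" using t by simp
  note G = fourier_gaussian[OF v, where z="0::real^2"]
  have e: "exp (- (1 / (4 * t)) * (norm k)\<^sup>2) = (4 * pi * t) * heat_kernel t k" for k :: "real^2"
    using t by (simp add: heat_kernel_def)
  have "integrable lborel (\<lambda>k::real^2. complex_of_real ((4 * pi * t) * heat_kernel t k))"
    using G(1) unfolding e by simp
  hence "integrable lborel (\<lambda>k::real^2. (4 * pi * t) * heat_kernel t k)"
    by (simp only: complex_of_real_integrable_eq)
  hence "integrable lborel (\<lambda>k::real^2. (1 / (4 * pi * t)) * ((4 * pi * t) * heat_kernel t k))"
    by (rule integrable_mult_right)
  hence i: "integrable lborel (heat_kernel t)" using t by simp
  have "complex_of_real (\<integral>k. (4 * pi * t) * heat_kernel t k \<partial>lborel)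
      = complex_of_real (sqrt (pi / (1 / (4 * t))) ^ 2)"
    using G(2) unfolding e by (simp add: DIM_cart)
  hence "(\<integral>k. (4 * pi * t) * heat_kernel t k \<partial>lborel) = 4 * pi * t"
    using t by (simp only: of_real_eq_iff) simp
  with i t show ?thesis by (simp add: has_bochner_integral_iff)
qed

lemma heat_kernel_translate:
  assumes t: "t > 0"
  shows "integrable lborel (\<lambda>y. heat_kernel t (x - y))"
    and "(\<integral>y. heat_kernel t (x - y) \<partial>lborel) = 1"
    and "(\<integral>\<^sup>+y. ennreal (heat_kernel t (x - y)) \<partial>lborel) = 1"
proof -
  have eq: "heat_kernel t (x - y) = heat_kernel t ((- x) + y)" for y
    by (simp add: heat_kernel_diff_commute)
  have d: "distr lborel borel ((+) (- x)) = (lborel :: (real^2) measure)"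
    by (rule lborel_distr_plus)
  note hk = has_bochner_integral_heat_kernel[OF t, unfolded has_bochner_integral_iff]
  have "integrable (distr lborel borel ((+) (- x))) (heat_kernel t)"
    unfolding d using hk by simp
  hence "integrable lborel (\<lambda>y. heat_kernel t ((- x) + y))"
    by (subst (asm) integrable_distr_eq) auto
  thus i: "integrable lborel (\<lambda>y. heat_kernel t (x - y))" unfolding eq .
  have "(\<integral>y. heat_kernel t ((- x) + y) \<partial>lborel) = (\<integral>y. heat_kernel t y \<partial>distr lborel borel ((+) (- x)))"
    by (subst integral_distr) auto
  also have "\<dots> = 1" unfolding d using hk by simp
  finally show 1: "(\<integral>y. heat_kernel t (x - y) \<partial>lborel) = 1" unfolding eq .
  show "(\<integral>\<^sup>+y. ennreal (heat_kernel t (x - y)) \<partial>lborel) = 1"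
    using nn_integral_eq_integral[OF i] 1 heat_kernel_nonneg t by simp
qed

lemma fourier_heat_kernel:
  fixes z :: "real^2" assumes t: "t > 0"
  shows "(\<integral>k. exp (\<i> * complex_of_real (k \<bullet> z)) * complex_of_real (exp (- t * (norm k)\<^sup>2)) \<partial>lborel)
       = complex_of_real ((2 * pi)\<^sup>2 * heat_kernel t z)"
  using t by (subst fourier_gaussian(2)[OF t]) (simp add: DIM_cart heat_kernel_def power2_eq_square field_simps)

lemma fourier2_measurable[measurable]:
  assumes [measurable]: "f \<in> borel_measurable borel"
  shows "fourier2 f \<in> borel_measurable borel"
  unfolding fourier2_def[abs_def] by measurable

lemma fourier_multiplier2_not_integrable:
  assumes "\<not> integrable lborel (\<lambda>k. complex_of_real (m k) * fourier2 f k)"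
  shows "fourier_multiplier2 m f x = 0"
proof -
  let ?g = "\<lambda>k. exp (\<i> * complex_of_real (k \<bullet> x)) * complex_of_real (m k) * fourier2 f k"
  have "\<not> integrable lborel ?g"
  proof
    assume g: "integrable lborel ?g"
    have "integrable lborel (\<lambda>k. exp (- \<i> * complex_of_real (k \<bullet> x)) * ?g k)"
      using borel_measurable_integrable[OF g]
      by (intro Bochner_Integration.integrable_bound[OF g]) (auto simp: norm_mult)
    moreover have "(\<lambda>k. exp (- \<i> * complex_of_real (k \<bullet> x)) * ?g k)
        = (\<lambda>k. complex_of_real (m k) * fourier2 f k)"
      by (simp add: fun_eq_iff mult.assoc[symmetric] exp_minus_inverse mult.commute[of "exp (- _)"])
    ultimately show False using assms by simp
  qed
  thus ?thesis by (simp add: fourier_multiplier2_def not_integrable_integral_eq)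
qed

lemma integrable_heat_multiplier_integrand:
  fixes f :: "real^2 \<Rightarrow> complex"
  assumes t: "t > 0" and fi: "integrable lborel f"
  shows "integrable (lborel \<Otimes>\<^sub>M lborel)
    (\<lambda>(k, y). exp (\<i> * complex_of_real (k \<bullet> (x - y))) * complex_of_real (exp (- t * (norm k)\<^sup>2)) * f y)"
proof (rule lborel_pair.Fubini_integrable)
  have [measurable]: "f \<in> borel_measurable borel" using borel_measurable_integrable[OF fi] by simp
  show "(\<lambda>(k, y). exp (\<i> * complex_of_real (k \<bullet> (x - y))) * complex_of_real (exp (- t * (norm k)\<^sup>2)) * f y)
      \<in> borel_measurable (lborel \<Otimes>\<^sub>M lborel)"
    by measurable
  show "integrable lborel (\<lambda>k. \<integral>y. norm ((\<lambda>(k, y). exp (\<i> * complex_of_real (k \<bullet> (x - y)))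
      * complex_of_real (exp (- t * (norm k)\<^sup>2)) * f y) (k, y)) \<partial>lborel)"
    using integrable_mult_left[OF gaussian_integrable[OF t], of "\<integral>y. norm (f y) \<partial>lborel"]
    by (simp add: norm_mult)
  show "AE k in lborel. integrable lborel (\<lambda>y. (\<lambda>(k, y). exp (\<i> * complex_of_real (k \<bullet> (x - y)))
      * complex_of_real (exp (- t * (norm k)\<^sup>2)) * f y) (k, y))"
    using t by (intro AE_I2 Bochner_Integration.integrable_bound[OF fi])
      (auto simp: norm_mult mult_left_le_one_le)
qed

lemma fourier_multiplier2_gaussian:
  fixes f :: "real^2 \<Rightarrow> complex"
  assumes t: "t > 0" and fi: "integrable lborel f"
  shows "fourier_multiplier2 (\<lambda>k. exp (- t * (norm k)\<^sup>2)) f x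
       = (\<integral>y. complex_of_real (heat_kernel t (x - y)) * f y \<partial>lborel)"
proof -
  define H where "H k y = exp (\<i> * complex_of_real (k \<bullet> (x - y))) * complex_of_real (exp (- t * (norm k)\<^sup>2)) * f y"
    for k y :: "real^2"
  have inner_y: "(\<integral>y. H k y \<partial>lborel)
      = exp (\<i> * complex_of_real (k \<bullet> x)) * complex_of_real (exp (- t * (norm k)\<^sup>2)) * fourier2 f k" for k
  proof -
    have "H k y = exp (\<i> * complex_of_real (k \<bullet> x)) * complex_of_real (exp (- t * (norm k)\<^sup>2))
        * (exp (- \<i> * complex_of_real (k \<bullet> y)) * f y)" for y
      by (simp add: H_def inner_diff_right exp_diff exp_minus field_simps)
    thus ?thesis unfolding fourier2_def by simp
  qed
  have inner_k: "(\<integral>k. H k y \<partial>lborel) = complex_of_real ((2 * pi)\<^sup>2 * heat_kernel t (x - y)) * f y" for y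
    using fourier_heat_kernel[OF t, of "x - y"] by (simp add: H_def)
  have "fourier_multiplier2 (\<lambda>k. exp (- t * (norm k)\<^sup>2)) f x
      = complex_of_real (1 / (2 * pi)\<^sup>2) * (\<integral>k. (\<integral>y. H k y \<partial>lborel) \<partial>lborel)"
    unfolding fourier_multiplier2_def inner_y ..
  also have "\<dots> = complex_of_real (1 / (2 * pi)\<^sup>2) * (\<integral>y. (\<integral>k. H k y \<partial>lborel) \<partial>lborel)"
    using lborel_pair.Fubini_integral[of H] integrable_heat_multiplier_integrand[OF t fi, of x]
    by (simp add: H_def[abs_def])
  also have "\<dots> = (\<integral>y. complex_of_real (heat_kernel t (x - y)) * f y \<partial>lborel)"
    unfolding inner_k by (simp add: mult.assoc)
  finally show ?thesis .
qed

section \<open>The heat semigroup on bounded functions\<close>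

lemma powr_tangent_le:
  fixes a s p :: real assumes a: "a > 0" and s: "s \<ge> 0" and p: "p \<ge> 1"
  shows "a powr p + p * a powr (p - 1) * (s - a) \<le> s powr p"
proof (cases "s = 0")
  case True
  have "a powr p + p * a powr (p - 1) * (0 - a) = a powr p * (1 - p)"
    using a by (simp add: powr_diff field_simps)
  also have "\<dots> \<le> 0" using p a by (simp add: mult_nonneg_nonpos)
  finally show ?thesis using True p by simp
next
  case False
  hence "s \<in> {0<..}" using s by simp
  have "(\<lambda>x. x powr p) s - (\<lambda>x. x powr p) a \<ge> (p * a powr (p - 1)) * (s - a)"
  proof (rule convex_on_imp_above_tangent[OF powr_convex[OF p] _ _ \<open>s \<in> {0<..}\<close>])
    show "a \<in> interior {0<..}" using a by (simp add: interior_open)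
    show "((\<lambda>x. x powr p) has_field_derivative p * a powr (p - 1)) (at a within {0<..})"
      using a by (auto intro!: derivative_eq_intros)
  qed simp
  thus ?thesis by simp
qed

lemma (in prob_space) powr_integral_le_integral_powr:
  fixes h :: "'a \<Rightarrow> real"
  assumes hm: "h \<in> borel_measurable M" and h0: "\<And>x. x \<in> space M \<Longrightarrow> 0 \<le> h x"
    and hB: "\<And>x. x \<in> space M \<Longrightarrow> h x \<le> B" and p: "p \<ge> 1"
  shows "(\<integral>x. h x \<partial>M) powr p \<le> (\<integral>x. h x powr p \<partial>M)"
proof -
  have ih: "integrable M h"
    by (rule integrable_const_bound[where B=B]) (use h0 hB hm in auto)
  have ihp: "integrable M (\<lambda>x. h x powr p)"
    by (rule integrable_const_bound[where B="B powr p"]) (use h0 hB hm p in \<open>auto intro!: powr_mono2\<close>)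
  define a where "a = (\<integral>x. h x \<partial>M)"
  have a0: "a \<ge> 0" unfolding a_def using h0 by (intro integral_nonneg_AE) auto
  show ?thesis
  proof (cases "a = 0")
    case True
    thus ?thesis using p h0 unfolding a_def[symmetric] by (auto intro!: integral_nonneg_AE)
  next
    case False
    hence a: "a > 0" using a0 by simp
    have "a powr p = (\<integral>x. a powr p + p * a powr (p - 1) * (h x - a) \<partial>M)"
      using ih prob_space by (simp add: a_def algebra_simps)
    also have "\<dots> \<le> (\<integral>x. h x powr p \<partial>M)"
      using powr_tangent_le[OF a _ p] h0 ih ihp by (intro integral_mono) auto
    finally show ?thesis by (simp add: a_def)
  qed
qed

definition heat_semigroup :: "real \<Rightarrow> (real^2 \<Rightarrow> real) \<Rightarrow> real^2 \<Rightarrow> real" where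
  "heat_semigroup t h x = (\<integral>y. heat_kernel t (x - y) * h y \<partial>lborel)"

lemma heat_semigroup_measurable[measurable]:
  assumes [measurable]: "T \<in> borel_measurable M" "h \<in> borel_measurable borel"
  shows "(\<lambda>\<omega>. heat_semigroup (T \<omega>) h x) \<in> borel_measurable M"
  unfolding heat_semigroup_def by measurable

lemma heat_semigroup_bounds:
  fixes h :: "real^2 \<Rightarrow> real"
  assumes t: "t > 0" and [measurable]: "h \<in> borel_measurable borel"
    and h0: "\<And>y. 0 \<le> h y" and hB: "\<And>y. h y \<le> B"
  shows "integrable lborel (\<lambda>y. heat_kernel t (x - y) * h y)"
    and "0 \<le> heat_semigroup t h x"
    and "heat_semigroup t h x \<le> B"
proof -
  note G = heat_kernel_translate[OF t, of x]
  have hk0: "heat_kernel t z \<ge> 0" for z using t by (simp add: heat_kernel_nonneg)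
  have B0: "B \<ge> 0" using h0[of 0] hB[of 0] by simp
  show i: "integrable lborel (\<lambda>y. heat_kernel t (x - y) * h y)"
  proof (rule Bochner_Integration.integrable_bound[where f="\<lambda>y. heat_kernel t (x - y) * B"])
    show "integrable lborel (\<lambda>y. heat_kernel t (x - y) * B)" using G(1) by (rule integrable_mult_left)
    show "AE y in lborel. norm (heat_kernel t (x - y) * h y) \<le> norm (heat_kernel t (x - y) * B)"
      using hk0 h0 hB B0 by (auto intro!: mult_left_mono simp: abs_mult)
  qed simp
  show "0 \<le> heat_semigroup t h x"
    unfolding heat_semigroup_def using hk0 h0 by (intro integral_nonneg_AE) auto
  have "(\<integral>y. heat_kernel t (x - y) * h y \<partial>lborel) \<le> (\<integral>y. heat_kernel t (x - y) * B \<partial>lborel)"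
    using i G(1) hk0 hB by (intro integral_mono integrable_mult_left) (auto intro: mult_left_mono)
  also have "\<dots> = B" using G(2) by simp
  finally show "heat_semigroup t h x \<le> B" unfolding heat_semigroup_def .
qed

lemma powr_heat_semigroup_le:
  fixes h :: "real^2 \<Rightarrow> real"
  assumes t: "t > 0" and [measurable]: "h \<in> borel_measurable borel"
    and h0: "\<And>y. 0 \<le> h y" and hB: "\<And>y. h y \<le> B" and q: "q \<ge> 1"
  shows "heat_semigroup t h x powr q \<le> heat_semigroup t (\<lambda>y. h y powr q) x"
proof -
  have hk0: "heat_kernel t z \<ge> 0" for z using t by (simp add: heat_kernel_nonneg)
  define Q where "Q = density lborel (\<lambda>y. ennreal (heat_kernel t (x - y)))"
  interpret Q: prob_space Q
  proof
    show "emeasure Q (space Q) = 1"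
      unfolding Q_def using heat_kernel_translate(3)[OF t] by (subst emeasure_density) auto
  qed
  have "(\<integral>y. h y \<partial>Q) powr q \<le> (\<integral>y. h y powr q \<partial>Q)"
    by (rule Q.powr_integral_le_integral_powr[OF _ _ _ q, where B=B]) (auto simp: Q_def h0 hB)
  moreover have "(\<integral>y. h y \<partial>Q) = (\<integral>y. heat_kernel t (x - y) * h y \<partial>lborel)"
    unfolding Q_def using hk0 by (subst integral_density) auto
  moreover have "(\<integral>y. h y powr q \<partial>Q) = (\<integral>y. heat_kernel t (x - y) * h y powr q \<partial>lborel)"
    unfolding Q_def using hk0 by (subst integral_density) auto
  ultimately show ?thesis by (simp add: heat_semigroup_def)
qed

lemma nn_integral_heat_semigroup:
  fixes h :: "real^2 \<Rightarrow> real"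
  assumes t: "t > 0" and [measurable]: "h \<in> borel_measurable borel" and h0: "\<And>y. 0 \<le> h y"
  shows "(\<integral>\<^sup>+x. (\<integral>\<^sup>+y. ennreal (heat_kernel t (x - y) * h y) \<partial>lborel) \<partial>lborel)
       = (\<integral>\<^sup>+y. ennreal (h y) \<partial>lborel)"
proof -
  have "(\<integral>\<^sup>+x. (\<integral>\<^sup>+y. ennreal (heat_kernel t (x - y) * h y) \<partial>lborel) \<partial>lborel)
      = (\<integral>\<^sup>+y. (\<integral>\<^sup>+x. ennreal (heat_kernel t (x - y) * h y) \<partial>lborel) \<partial>lborel)"
    by (rule lborel_pair.Fubini'[symmetric]) measurable
  also have "\<dots> = (\<integral>\<^sup>+y. ennreal (h y) \<partial>lborel)"
  proof (rule nn_integral_cong)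
    fix y :: "real^2"
    have "(\<integral>\<^sup>+x. ennreal (heat_kernel t (x - y) * h y) \<partial>lborel)
        = (\<integral>\<^sup>+x. ennreal (heat_kernel t (y - x)) * ennreal (h y) \<partial>lborel)"
      using t h0
      by (intro nn_integral_cong) (simp add: heat_kernel_diff_commute[of t _ y] ennreal_mult heat_kernel_nonneg)
    also have "\<dots> = (\<integral>\<^sup>+x. ennreal (heat_kernel t (y - x)) \<partial>lborel) * ennreal (h y)"
      by (rule nn_integral_multc) measurable
    also have "\<dots> = ennreal (h y)"
      using heat_kernel_translate(3)[OF t, of y] by simp
    finally show "(\<integral>\<^sup>+x. ennreal (heat_kernel t (x - y) * h y) \<partial>lborel) = ennreal (h y)" .
  qed
  finally show ?thesis .
qed

section \<open>Compactly supported functions and their \<open>L\<^sup>p\<close> norms\<close>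

lemma continuous_compact_support_bounded:
  fixes f :: "'a::topological_space \<Rightarrow> 'b::real_normed_vector"
  assumes cont: "continuous_on UNIV f" and cpt: "compact (closure {x. f x \<noteq> 0})"
  shows "\<exists>B\<ge>0. \<forall>y. norm (f y) \<le> B"
proof -
  let ?K = "closure {x. f x \<noteq> 0}"
  have "compact (f ` ?K)"
    using cpt cont by (intro compact_continuous_image) (auto intro: continuous_on_subset)
  then obtain B where B: "\<And>z. z \<in> f ` ?K \<Longrightarrow> norm z \<le> B"
    using compact_imp_bounded bounded_iff by metis
  have "norm (f y) \<le> max B 0" for y
    using B[of "f y"] closure_subset[of "{x. f x \<noteq> 0}"] by (cases "f y = 0") auto
  thus ?thesis by (intro exI[of _ "max B 0"]) auto
qed

lemma integrable_powr_continuous_compact_support: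
  fixes f :: "'a::euclidean_space \<Rightarrow> 'b::real_normed_vector"
  assumes cont: "continuous_on UNIV f" and cpt: "compact (closure {x. f x \<noteq> 0})" and p: "p > 0"
  shows "integrable lborel (\<lambda>y. norm (f y) powr p)"
proof -
  let ?K = "closure {x. f x \<noteq> 0}"
  obtain B where B: "\<And>y. norm (f y) \<le> B"
    using continuous_compact_support_bounded[OF cont cpt] by blast
  have bound: "norm (norm (f y) powr p) \<le> norm (indicator ?K y *\<^sub>R (B powr p))" for y
  proof (cases "y \<in> ?K")
    case True thus ?thesis using B[of y] p by (simp add: powr_mono2)
  next
    case False thus ?thesis using closure_subset[of "{x. f x \<noteq> 0}"] by auto
  qed
  show ?thesis
  proof (rule Bochner_Integration.integrable_bound)
    show "integrable lborel (\<lambda>y. indicator ?K y *\<^sub>R (B powr p))"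
      using cpt by (intro integrable_indicator emeasure_bounded_finite compact_imp_bounded) auto
    have "f \<in> borel_measurable borel" using cont by (rule borel_measurable_continuous_onI)
    thus "(\<lambda>y. norm (f y) powr p) \<in> borel_measurable lborel" by simp
    show "AE y in lborel. norm (norm (f y) powr p) \<le> norm (indicator ?K y *\<^sub>R (B powr p))"
      using bound by simp
  qed
qed

lemma integrable_continuous_compact_support:
  fixes f :: "'a::euclidean_space \<Rightarrow> 'b::{banach, second_countable_topology}"
  assumes cont: "continuous_on UNIV f" and cpt: "compact (closure {x. f x \<noteq> 0})"
  shows "integrable lborel f"
proof -
  have [measurable]: "f \<in> borel_measurable borel" using cont by (rule borel_measurable_continuous_onI)
  have "integrable lborel (\<lambda>y. norm (f y) powr 1)"
    by (rule integrable_powr_continuous_compact_support[OF cont cpt]) simp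
  thus ?thesis by (subst integrable_norm_iff[symmetric]) auto
qed

lemma continuous_norm_le_esssup:
  fixes f :: "'a::euclidean_space \<Rightarrow> 'b::real_normed_vector"
  assumes cont: "continuous_on UNIV f"
  shows "ennreal (norm (f y)) \<le> esssup lborel (\<lambda>y. ennreal (norm (f y)))"
proof (rule ccontr)
  let ?E = "esssup lborel (\<lambda>y. ennreal (norm (f y)))"
  assume "\<not> ennreal (norm (f y)) \<le> ?E"
  hence lt: "?E < ennreal (norm (f y))" by simp
  then obtain s where s: "?E = ennreal s" "s \<ge> 0" by (cases ?E) (auto simp: top_unique)
  have sl: "s < norm (f y)" using lt s by (simp add: ennreal_less_iff)
  have [measurable]: "f \<in> borel_measurable borel" using cont by (rule borel_measurable_continuous_onI)
  have AE: "AE z in lborel. norm (f z) \<le> s"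
    using esssup_AE[of "\<lambda>y. ennreal (norm (f y))" lborel] s by (auto elim!: eventually_mono)
  have "open {z. s < norm (f z)}" using cont by (intro open_Collect_less continuous_intros) auto
  then obtain r where r: "r > 0" "ball y r \<subseteq> {z. s < norm (f z)}"
    using sl open_contains_ball by blast
  have meas: "{z \<in> space lborel. \<not> norm (f z) \<le> s} \<in> sets lborel" by measurable
  have "emeasure lborel {z \<in> space lborel. \<not> norm (f z) \<le> s} = 0"
    using AE by (subst (asm) AE_iff_measurable[OF meas refl])
  moreover have "emeasure lborel (ball y r) \<le> emeasure lborel {z \<in> space lborel. \<not> norm (f z) \<le> s}"
    using r meas by (intro emeasure_mono) auto
  ultimately have "measure lborel (ball y r) = 0" by (simp add: measure_def)
  with r content_ball_gt_0_iff[of y r] show False by simp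
qed

lemma Lp_norm2_top_le:
  assumes cont: "continuous_on UNIV f" and [measurable]: "g \<in> borel_measurable borel"
    and bound: "\<And>s x. (\<And>y. norm (f y) \<le> s) \<Longrightarrow> norm (g x) \<le> s"
  shows "Lp_norm2 \<infinity> g \<le> Lp_norm2 \<infinity> f"
proof (cases "esssup lborel (\<lambda>y. ennreal (norm (f y)))")
  case (real s)
  have "norm (f y) \<le> s" for y using continuous_norm_le_esssup[OF cont, of y] real by simp
  hence "norm (g x) \<le> s" for x by (rule bound)
  hence "esssup lborel (\<lambda>x. ennreal (norm (g x))) \<le> ennreal s"
    by (intro esssup_I) (auto intro: ennreal_leI)
  thus ?thesis using real by (simp add: Lp_norm2_def)
qed (simp add: Lp_norm2_def)

lemma Lp_norm2_le_if_nn_integral_powr_le: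
  assumes p: "p \<noteq> \<infinity>"
    and le: "(\<integral>\<^sup>+x. ennreal (norm (g x) powr enn2real p) \<partial>lborel)
           \<le> (\<integral>\<^sup>+x. ennreal (norm (f x) powr enn2real p) \<partial>lborel)"
  shows "Lp_norm2 p g \<le> Lp_norm2 p f"
proof -
  define Ig where "Ig = (\<integral>\<^sup>+x. ennreal (norm (g x) powr enn2real p) \<partial>lborel)"
  define If where "If = (\<integral>\<^sup>+x. ennreal (norm (f x) powr enn2real p) \<partial>lborel)"
  show ?thesis
  proof (cases "If = \<infinity>")
    case False
    hence "Ig \<noteq> \<infinity>" using le by (auto simp: Ig_def If_def top_unique)
    moreover have "enn2real Ig powr (1 / enn2real p) \<le> enn2real If powr (1 / enn2real p)"
      using le False by (intro powr_mono2 enn2real_mono) (auto simp: Ig_def If_def less_top)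
    ultimately show ?thesis
      using p False by (simp add: Lp_norm2_def Let_def Ig_def[symmetric] If_def[symmetric] ennreal_leI)
  qed (use p in \<open>simp add: Lp_norm2_def Let_def If_def[symmetric]\<close>)
qed

section \<open>Multipliers with Gaussian mixture symbols\<close>

locale gaussian_mixture = prob_space N for N :: "'w measure" +
  fixes T :: "'w \<Rightarrow> real" and m :: "real^2 \<Rightarrow> real"
  assumes T_measurable[measurable]: "T \<in> borel_measurable N"
    and T_pos: "\<And>\<omega>. \<omega> \<in> space N \<Longrightarrow> T \<omega> > 0"
    and symbol_eq: "\<And>k. m k = (\<integral>\<omega>. exp (- T \<omega> * (norm k)\<^sup>2) \<partial>N)"
begin

lemma symbol_measurable[measurable]: "m \<in> borel_measurable borel"
proof -
  have "(\<lambda>k. \<integral>\<omega>. exp (- T \<omega> * (norm k)\<^sup>2) \<partial>N) \<in> borel_measurable borel" by measurable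
  thus ?thesis by (simp add: symbol_eq[abs_def])
qed

lemma symbol_nonneg: "m k \<ge> 0"
  unfolding symbol_eq by (intro integral_nonneg_AE) auto

lemma integrable_heat_mixture_integrand:
  fixes f :: "real^2 \<Rightarrow> complex"
  assumes [measurable]: "f \<in> borel_measurable borel"
    and int: "integrable lborel (\<lambda>k. complex_of_real (m k) * fourier2 f k)"
  shows "integrable (lborel \<Otimes>\<^sub>M N)
    (\<lambda>(k, \<omega>). exp (\<i> * complex_of_real (k \<bullet> x)) * complex_of_real (exp (- T \<omega> * (norm k)\<^sup>2)) * fourier2 f k)"
proof -
  interpret P: pair_sigma_finite "lborel :: (real^2) measure" N
    by (intro pair_sigma_finite.intro sigma_finite_lborel sigma_finite_measure_axioms)
  define \<Phi> where "\<Phi> k \<omega> = exp (\<i> * complex_of_real (k \<bullet> x)) * complex_of_real (exp (- T \<omega> * (norm k)\<^sup>2))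
    * fourier2 f k" for k :: "real^2" and \<omega>
  have \<Phi>m[measurable]: "(\<lambda>(k, \<omega>). \<Phi> k \<omega>) \<in> borel_measurable (lborel \<Otimes>\<^sub>M N)"
    unfolding \<Phi>_def by measurable
  have norm\<Phi>: "norm (\<Phi> k \<omega>) = exp (- T \<omega> * (norm k)\<^sup>2) * norm (fourier2 f k)" for k \<omega>
    by (simp add: \<Phi>_def norm_mult)
  have "integrable (lborel \<Otimes>\<^sub>M N) (\<lambda>(k, \<omega>). \<Phi> k \<omega>)"
  proof (rule P.Fubini_integrable)
    have "norm (complex_of_real (m k) * fourier2 f k) = (\<integral>\<omega>. norm (\<Phi> k \<omega>) \<partial>N)" for k
      using symbol_nonneg[of k] by (simp add: norm_mult symbol_eq norm\<Phi>)
    thus "integrable lborel (\<lambda>k. \<integral>\<omega>. norm ((\<lambda>(k, \<omega>). \<Phi> k \<omega>) (k, \<omega>)) \<partial>N)"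
      using integrable_norm[OF int] by simp
    have "norm (\<Phi> k \<omega>) \<le> norm (fourier2 f k)" if "\<omega> \<in> space N" for k \<omega>
      using T_pos[OF that] by (simp add: norm\<Phi> mult_left_le_one_le)
    thus "AE k in lborel. integrable N (\<lambda>\<omega>. (\<lambda>(k, \<omega>). \<Phi> k \<omega>) (k, \<omega>))"
      using measurable_Pair2[OF \<Phi>m]
      by (intro AE_I2 integrable_const_bound[where B="norm (fourier2 f _)"]) auto
  qed simp
  thus ?thesis by (simp add: \<Phi>_def[abs_def])
qed

lemma fourier_multiplier2_eq_heat_mixture:
  fixes f :: "real^2 \<Rightarrow> complex"
  assumes fi: "integrable lborel f"
    and int: "integrable lborel (\<lambda>k. complex_of_real (m k) * fourier2 f k)"
  shows "fourier_multiplier2 m f x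
       = (\<integral>\<omega>. (\<integral>y. complex_of_real (heat_kernel (T \<omega>) (x - y)) * f y \<partial>lborel) \<partial>N)"
proof -
  interpret P: pair_sigma_finite "lborel :: (real^2) measure" N
    by (intro pair_sigma_finite.intro sigma_finite_lborel sigma_finite_measure_axioms)
  have fm[measurable]: "f \<in> borel_measurable borel" using borel_measurable_integrable[OF fi] by simp
  define \<Phi> where "\<Phi> k \<omega> = exp (\<i> * complex_of_real (k \<bullet> x)) * complex_of_real (exp (- T \<omega> * (norm k)\<^sup>2))
    * fourier2 f k" for k :: "real^2" and \<omega>
  have "(\<integral>k. exp (\<i> * complex_of_real (k \<bullet> x)) * complex_of_real (m k) * fourier2 f k \<partial>lborel)
      = (\<integral>k. (\<integral>\<omega>. \<Phi> k \<omega> \<partial>N) \<partial>lborel)"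
    unfolding \<Phi>_def symbol_eq by simp
  also have "\<dots> = (\<integral>\<omega>. (\<integral>k. \<Phi> k \<omega> \<partial>lborel) \<partial>N)"
    using P.Fubini_integral[of \<Phi>] integrable_heat_mixture_integrand[OF fm int, of x]
    by (simp add: \<Phi>_def[abs_def])
  finally have "fourier_multiplier2 m f x
      = (\<integral>\<omega>. fourier_multiplier2 (\<lambda>k. exp (- T \<omega> * (norm k)\<^sup>2)) f x \<partial>N)"
    unfolding fourier_multiplier2_def \<Phi>_def by simp
  also have "\<dots> = (\<integral>\<omega>. (\<integral>y. complex_of_real (heat_kernel (T \<omega>) (x - y)) * f y \<partial>lborel) \<partial>N)"
    using fourier_multiplier2_gaussian[OF T_pos fi] by (intro Bochner_Integration.integral_cong) auto
  finally show ?thesis .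
qed

lemma norm_fourier_multiplier2_le:
  fixes f :: "real^2 \<Rightarrow> complex"
  assumes cont: "continuous_on UNIV f" and cpt: "compact (closure {x. f x \<noteq> 0})"
  shows "norm (fourier_multiplier2 m f x) \<le> (\<integral>\<omega>. heat_semigroup (T \<omega>) (\<lambda>y. norm (f y)) x \<partial>N)"
proof -
  have [measurable]: "f \<in> borel_measurable borel" using cont by (rule borel_measurable_continuous_onI)
  obtain B where B: "\<And>y. norm (f y) \<le> B" using continuous_compact_support_bounded[OF cont cpt] by blast
  let ?a = "\<lambda>\<omega>. heat_semigroup (T \<omega>) (\<lambda>y. norm (f y)) x"
  have a_bounds: "0 \<le> ?a \<omega>" "?a \<omega> \<le> B" if "\<omega> \<in> space N" for \<omega>
    using heat_semigroup_bounds[OF T_pos[OF that], of "\<lambda>y. norm (f y)" B x] B by auto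
  have a_int: "integrable N ?a"
    using a_bounds by (intro integrable_const_bound[where B=B]) auto
  show ?thesis
  proof (cases "integrable lborel (\<lambda>k. complex_of_real (m k) * fourier2 f k)")
    case False
    thus ?thesis using a_bounds by (simp add: fourier_multiplier2_not_integrable integral_nonneg_AE)
  next
    case True
    let ?G = "\<lambda>\<omega>. (\<integral>y. complex_of_real (heat_kernel (T \<omega>) (x - y)) * f y \<partial>lborel)"
    have G_le: "norm (?G \<omega>) \<le> ?a \<omega>" if "\<omega> \<in> space N" for \<omega>
    proof -
      have "norm (?G \<omega>) \<le> (\<integral>y. norm (complex_of_real (heat_kernel (T \<omega>) (x - y)) * f y) \<partial>lborel)"
        by (rule integral_norm_bound)
      also have "\<dots> = ?a \<omega>"
        using heat_kernel_nonneg[of "T \<omega>"] T_pos[OF that]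
        by (simp add: heat_semigroup_def norm_mult)
      finally show ?thesis .
    qed
    have G_int: "integrable N (\<lambda>\<omega>. norm (?G \<omega>))"
      using G_le a_bounds by (intro integrable_const_bound[where B=B] AE_I2) (auto intro: order.trans)
    have "norm (fourier_multiplier2 m f x) \<le> (\<integral>\<omega>. norm (?G \<omega>) \<partial>N)"
      unfolding fourier_multiplier2_eq_heat_mixture[OF integrable_continuous_compact_support[OF cont cpt] True]
      by (rule integral_norm_bound)
    also have "\<dots> \<le> (\<integral>\<omega>. ?a \<omega> \<partial>N)"
      using G_int a_int G_le by (rule integral_mono)
    finally show ?thesis .
  qed
qed

lemma powr_norm_fourier_multiplier2_le:
  fixes f :: "real^2 \<Rightarrow> complex"
  assumes cont: "continuous_on UNIV f" and cpt: "compact (closure {x. f x \<noteq> 0})" and q: "q \<ge> 1"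
  shows "norm (fourier_multiplier2 m f x) powr q
       \<le> (\<integral>\<omega>. heat_semigroup (T \<omega>) (\<lambda>y. norm (f y) powr q) x \<partial>N)"
proof -
  have [measurable]: "f \<in> borel_measurable borel" using cont by (rule borel_measurable_continuous_onI)
  obtain B where B: "\<And>y. norm (f y) \<le> B" using continuous_compact_support_bounded[OF cont cpt] by blast
  have Bq: "norm (f y) powr q \<le> B powr q" for y using B q by (intro powr_mono2) auto
  let ?a = "\<lambda>\<omega>. heat_semigroup (T \<omega>) (\<lambda>y. norm (f y)) x"
  let ?b = "\<lambda>\<omega>. heat_semigroup (T \<omega>) (\<lambda>y. norm (f y) powr q) x"
  have a_bounds: "0 \<le> ?a \<omega>" "?a \<omega> \<le> B" if "\<omega> \<in> space N" for \<omega>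
    using heat_semigroup_bounds[OF T_pos[OF that], of "\<lambda>y. norm (f y)" B x] B by auto
  have b_bounds: "0 \<le> ?b \<omega>" "?b \<omega> \<le> B powr q" if "\<omega> \<in> space N" for \<omega>
    using heat_semigroup_bounds[OF T_pos[OF that], of "\<lambda>y. norm (f y) powr q" "B powr q" x] Bq by auto
  have "norm (fourier_multiplier2 m f x) powr q \<le> (\<integral>\<omega>. ?a \<omega> \<partial>N) powr q"
    using norm_fourier_multiplier2_le[OF cont cpt] q by (intro powr_mono2) auto
  also have "\<dots> \<le> (\<integral>\<omega>. ?a \<omega> powr q \<partial>N)"
    using a_bounds q by (intro powr_integral_le_integral_powr[where B=B]) auto
  also have "\<dots> \<le> (\<integral>\<omega>. ?b \<omega> \<partial>N)"
  proof (rule integral_mono)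
    show "integrable N (\<lambda>\<omega>. ?a \<omega> powr q)"
      using a_bounds q by (intro integrable_const_bound[where B="B powr q"] AE_I2) (auto intro!: powr_mono2)
    show "integrable N ?b"
      using b_bounds by (intro integrable_const_bound[where B="B powr q"]) auto
    show "?a \<omega> powr q \<le> ?b \<omega>" if "\<omega> \<in> space N" for \<omega>
      using powr_heat_semigroup_le[OF T_pos[OF that] _ _ B q] by simp
  qed
  finally show ?thesis .
qed

lemma nn_integral_heat_mixture:
  fixes h :: "real^2 \<Rightarrow> real"
  assumes [measurable]: "h \<in> borel_measurable borel" and h0: "\<And>y. 0 \<le> h y" and hB: "\<And>y. h y \<le> B"
  shows "(\<integral>\<^sup>+x. ennreal (\<integral>\<omega>. heat_semigroup (T \<omega>) h x \<partial>N) \<partial>lborel) = (\<integral>\<^sup>+y. ennreal (h y) \<partial>lborel)"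
proof -
  interpret P: pair_sigma_finite "lborel :: (real^2) measure" N
    by (intro pair_sigma_finite.intro sigma_finite_lborel sigma_finite_measure_axioms)
  note bounds = heat_semigroup_bounds[OF T_pos _ h0 hB]
  have "ennreal (\<integral>\<omega>. heat_semigroup (T \<omega>) h x \<partial>N)
      = (\<integral>\<^sup>+\<omega>. (\<integral>\<^sup>+y. ennreal (heat_kernel (T \<omega>) (x - y) * h y) \<partial>lborel) \<partial>N)" for x
  proof -
    have "ennreal (\<integral>\<omega>. heat_semigroup (T \<omega>) h x \<partial>N) = (\<integral>\<^sup>+\<omega>. ennreal (heat_semigroup (T \<omega>) h x) \<partial>N)"
      using bounds by (intro nn_integral_eq_integral[symmetric] integrable_const_bound[where B=B]) auto
    also have "\<dots> = (\<integral>\<^sup>+\<omega>. (\<integral>\<^sup>+y. ennreal (heat_kernel (T \<omega>) (x - y) * h y) \<partial>lborel) \<partial>N)"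
    proof (rule nn_integral_cong)
      fix \<omega> assume \<omega>: "\<omega> \<in> space N"
      show "ennreal (heat_semigroup (T \<omega>) h x) = (\<integral>\<^sup>+y. ennreal (heat_kernel (T \<omega>) (x - y) * h y) \<partial>lborel)"
        unfolding heat_semigroup_def using bounds(1)[OF \<omega>] heat_kernel_nonneg T_pos[OF \<omega>] h0
        by (intro nn_integral_eq_integral[symmetric]) (auto intro!: mult_nonneg_nonneg less_imp_le)
    qed
    finally show ?thesis .
  qed
  hence "(\<integral>\<^sup>+x. ennreal (\<integral>\<omega>. heat_semigroup (T \<omega>) h x \<partial>N) \<partial>lborel)
      = (\<integral>\<^sup>+\<omega>. (\<integral>\<^sup>+x. (\<integral>\<^sup>+y. ennreal (heat_kernel (T \<omega>) (x - y) * h y) \<partial>lborel) \<partial>lborel) \<partial>N)"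
    using P.Fubini'[symmetric] by simp
  also have "\<dots> = (\<integral>\<^sup>+\<omega>. (\<integral>\<^sup>+y. ennreal (h y) \<partial>lborel) \<partial>N)"
  proof (rule nn_integral_cong)
    fix \<omega> assume "\<omega> \<in> space N"
    show "(\<integral>\<^sup>+x. (\<integral>\<^sup>+y. ennreal (heat_kernel (T \<omega>) (x - y) * h y) \<partial>lborel) \<partial>lborel)
        = (\<integral>\<^sup>+y. ennreal (h y) \<partial>lborel)"
      using T_pos[OF \<open>\<omega> \<in> space N\<close>] h0 by (intro nn_integral_heat_semigroup) auto
  qed
  also have "\<dots> = (\<integral>\<^sup>+y. ennreal (h y) \<partial>lborel)" using emeasure_space_1 by simp
  finally show ?thesis .
qed

theorem Lp_norm2_fourier_multiplier2_le:
  fixes f :: "real^2 \<Rightarrow> complex"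
  assumes cont: "continuous_on UNIV f" and cpt: "compact (closure {x. f x \<noteq> 0})" and p: "1 \<le> p"
  shows "Lp_norm2 p (fourier_multiplier2 m f) \<le> Lp_norm2 p f"
proof (cases "p = \<infinity>")
  case True
  have [measurable]: "f \<in> borel_measurable borel" using cont by (rule borel_measurable_continuous_onI)
  show ?thesis unfolding True
  proof (rule Lp_norm2_top_le[OF cont])
    show "fourier_multiplier2 m f \<in> borel_measurable borel"
      unfolding fourier_multiplier2_def[abs_def] by measurable
    fix s x assume s: "\<And>y. norm (f y) \<le> s"
    have bounds: "0 \<le> heat_semigroup (T \<omega>) (\<lambda>y. norm (f y)) x"
        "heat_semigroup (T \<omega>) (\<lambda>y. norm (f y)) x \<le> s" if "\<omega> \<in> space N" for \<omega>
      using heat_semigroup_bounds[OF T_pos[OF that], of "\<lambda>y. norm (f y)" s x] s by auto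
    have "norm (fourier_multiplier2 m f x) \<le> (\<integral>\<omega>. heat_semigroup (T \<omega>) (\<lambda>y. norm (f y)) x \<partial>N)"
      by (rule norm_fourier_multiplier2_le[OF cont cpt])
    also have "\<dots> \<le> (\<integral>\<omega>. s \<partial>N)"
      using bounds order.trans[OF norm_ge_zero s]
      by (intro integral_mono integrable_const_bound[where B=s]) auto
    finally show "norm (fourier_multiplier2 m f x) \<le> s" using prob_space by simp
  qed
next
  case False
  define q where "q = enn2real p"
  have q: "q \<ge> 1" unfolding q_def using enn2real_mono[OF p] False by (simp add: less_top)
  have [measurable]: "f \<in> borel_measurable borel" using cont by (rule borel_measurable_continuous_onI)
  obtain B where B: "\<And>y. norm (f y) \<le> B" using continuous_compact_support_bounded[OF cont cpt] by blast
  have Bq: "norm (f y) powr q \<le> B powr q" for y using B q by (intro powr_mono2) auto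
  have "(\<integral>\<^sup>+x. ennreal (norm (fourier_multiplier2 m f x) powr q) \<partial>lborel)
      \<le> (\<integral>\<^sup>+x. ennreal (\<integral>\<omega>. heat_semigroup (T \<omega>) (\<lambda>y. norm (f y) powr q) x \<partial>N) \<partial>lborel)"
    by (intro nn_integral_mono ennreal_leI powr_norm_fourier_multiplier2_le[OF cont cpt q])
  also have "\<dots> = (\<integral>\<^sup>+y. ennreal (norm (f y) powr q) \<partial>lborel)"
    by (rule nn_integral_heat_mixture[OF _ _ Bq]) auto
  finally show ?thesis
    using False by (intro Lp_norm2_le_if_nn_integral_powr_le) (simp_all add: q_def)
qed

end

theorem Lp_norm2_fourier_multiplier2_le_mixture:
  fixes M :: "'w measure" and W :: "'w \<Rightarrow> ennreal" and T :: "'w \<Rightarrow> real"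
    and m :: "real^2 \<Rightarrow> real" and f :: "real^2 \<Rightarrow> complex" and p :: ennreal
  assumes [measurable]: "W \<in> borel_measurable M" "T \<in> borel_measurable M"
    and T_pos: "\<And>\<omega>. \<omega> \<in> space M \<Longrightarrow> W \<omega> \<noteq> 0 \<Longrightarrow> T \<omega> > 0"
    and m_nonneg: "\<And>k. m k \<ge> 0" and m_0: "m 0 = 1"
    and m_eq: "\<And>k. ennreal (m k) = (\<integral>\<^sup>+\<omega>. W \<omega> * ennreal (exp (- T \<omega> * (norm k)\<^sup>2)) \<partial>M)"
    and cont: "continuous_on UNIV f" and cpt: "compact (closure {x. f x \<noteq> 0})" and p: "1 \<le> p"
  shows "Lp_norm2 p (fourier_multiplier2 m f) \<le> Lp_norm2 p f"
proof -
  (* T only matters where W does not vanish; elsewhere it is reset to 1 to make it positive *)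
  define T' where "T' \<omega> = (if T \<omega> > 0 then T \<omega> else 1)" for \<omega>
  have [measurable]: "T' \<in> borel_measurable M" unfolding T'_def by measurable
  have m_eq': "ennreal (m k) = (\<integral>\<^sup>+\<omega>. W \<omega> * ennreal (exp (- T' \<omega> * (norm k)\<^sup>2)) \<partial>M)" for k
    unfolding m_eq
  proof (intro nn_integral_cong)
    fix \<omega> assume "\<omega> \<in> space M"
    thus "W \<omega> * ennreal (exp (- T \<omega> * (norm k)\<^sup>2)) = W \<omega> * ennreal (exp (- T' \<omega> * (norm k)\<^sup>2))"
      using T_pos[of \<omega>] by (cases "W \<omega> = 0") (auto simp: T'_def)
  qed
  define N where "N = density M W"
  interpret N: prob_space N
  proof
    have "emeasure N (space N) = (\<integral>\<^sup>+\<omega>. W \<omega> * ennreal (exp (- T' \<omega> * (norm (0::real^2))\<^sup>2)) \<partial>M)"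
      unfolding N_def by (subst emeasure_density) (auto intro!: nn_integral_cong)
    also have "\<dots> = 1" using m_eq'[of 0] m_0 by simp
    finally show "emeasure N (space N) = 1" .
  qed
  have T'_N[measurable]: "T' \<in> borel_measurable N" unfolding N_def by simp
  have T'_pos: "T' \<omega> > 0" for \<omega> by (simp add: T'_def)
  interpret gaussian_mixture N T' m
  proof
    fix k :: "real^2"
    have "ennreal (\<integral>\<omega>. exp (- T' \<omega> * (norm k)\<^sup>2) \<partial>N) = (\<integral>\<^sup>+\<omega>. ennreal (exp (- T' \<omega> * (norm k)\<^sup>2)) \<partial>N)"
      using T'_pos by (intro nn_integral_eq_integral[symmetric] N.integrable_const_bound[where B=1])
        (auto intro!: AE_I2 simp: zero_le_mult_iff less_imp_le)
    also have "\<dots> = ennreal (m k)"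
      unfolding N_def m_eq' by (subst nn_integral_density) auto
    finally show "m k = (\<integral>\<omega>. exp (- T' \<omega> * (norm k)\<^sup>2) \<partial>N)"
      using m_nonneg[of k] by (simp add: integral_nonneg_AE)
  qed (simp_all add: T'_pos)
  show ?thesis by (rule Lp_norm2_fourier_multiplier2_le[OF cont cpt p])
qed

section \<open>One-dimensional integrals\<close>

lemma borel_measurable_Gamma_real[measurable]: "(Gamma :: real \<Rightarrow> real) \<in> borel_measurable borel"
proof -
  have "(rGamma :: real \<Rightarrow> real) \<in> borel_measurable borel"
    by (rule borel_measurable_continuous_onI) (rule continuous_on_rGamma)
  hence "(\<lambda>x. inverse (rGamma x :: real)) \<in> borel_measurable borel" by measurable
  thus ?thesis by (simp add: Gamma_def[abs_def])
qed

lemma nn_integral_powr_exp: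
  fixes a c :: real assumes a: "a > 0" and c: "c > 0"
  shows "(\<integral>\<^sup>+x. ennreal (indicator {0..} x * x powr (a - 1) * exp (- c * x)) \<partial>lborel) = ennreal (Gamma a / c powr a)"
proof -
  let ?f = "\<lambda>t. ennreal (indicator {0..} t * t powr (a - 1) / exp t)"
  let ?I = "\<integral>\<^sup>+x. ennreal (indicator {0..} x * x powr (a - 1) * exp (- c * x)) \<partial>lborel"
  have scale: "?f (0 + c * x) = ennreal (c powr (a - 1)) * ennreal (indicator {0..} x * x powr (a - 1) * exp (- c * x))"
    for x
    using c by (cases "x \<ge> 0")
      (simp_all add: ennreal_mult[symmetric] powr_mult exp_minus field_simps indicator_def zero_le_mult_iff)
  have "ennreal (Gamma a) = ennreal c * (\<integral>\<^sup>+x. ?f (0 + c * x) \<partial>lborel)"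
    using Gamma_conv_nn_integral_real[OF a] nn_integral_real_affine[of ?f c 0] c by simp
  also have "(\<integral>\<^sup>+x. ?f (0 + c * x) \<partial>lborel) = ennreal (c powr (a - 1)) * ?I"
    unfolding scale by (rule nn_integral_cmult) simp
  also have "ennreal c * (ennreal (c powr (a - 1)) * ?I) = ennreal (c powr a) * ?I"
    using c by (simp add: mult.assoc[symmetric] ennreal_mult[symmetric] powr_mult_base)
  finally have "ennreal (c powr a) * ?I = ennreal (c powr a) * ennreal (Gamma a / c powr a)"
    using c a by (simp add: ennreal_mult[symmetric] Gamma_real_pos less_imp_le)
  thus ?thesis using c by (subst (asm) ennreal_mult_cancel_left) auto
qed

(* the Gamma(a) density with rate c, without its normalising factor c powr a; c = 0 is allowed *)
definition gamma_kernel :: "real \<Rightarrow> real \<Rightarrow> real \<Rightarrow> real" where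
  "gamma_kernel a c x = indicator {0..} x * x powr (a - 1) * exp (- c * x) / Gamma a"

lemma gamma_kernel_measurable[measurable]:
  assumes [measurable]: "a \<in> borel_measurable M" "c \<in> borel_measurable M" "x \<in> borel_measurable M"
  shows "(\<lambda>\<omega>. gamma_kernel (a \<omega>) (c \<omega>) (x \<omega>)) \<in> borel_measurable M"
  unfolding gamma_kernel_def by measurable

lemma gamma_kernel_eq_0: "x \<le> 0 \<Longrightarrow> gamma_kernel a c x = 0"
  by (cases "x = 0") (auto simp: gamma_kernel_def indicator_def)

lemma gamma_kernel_mult_exp: "gamma_kernel a c x * exp (- s * x) = gamma_kernel a (c + s) x"
  by (simp add: gamma_kernel_def exp_add[symmetric] algebra_simps)

lemma nn_integral_gamma_kernel:
  fixes a c :: real assumes a: "a > 0" and c: "c > 0"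
  shows "(\<integral>\<^sup>+x. ennreal (gamma_kernel a c x) \<partial>lborel) = ennreal (c powr (- a))"
proof -
  have "(\<integral>\<^sup>+x. ennreal (gamma_kernel a c x) \<partial>lborel)
      = (\<integral>\<^sup>+x. ennreal (indicator {0..} x * x powr (a - 1) * exp (- c * x)) * ennreal (1 / Gamma a) \<partial>lborel)"
    using Gamma_real_pos[OF a]
    by (intro nn_integral_cong) (simp add: gamma_kernel_def ennreal_mult[symmetric] indicator_def)
  also have "\<dots> = ennreal (Gamma a / c powr a) * ennreal (1 / Gamma a)"
    by (subst nn_integral_multc, simp, subst nn_integral_powr_exp[OF a c], rule refl)
  also have "\<dots> = ennreal (c powr (- a))"
    using Gamma_real_pos[OF a] c by (simp add: ennreal_mult[symmetric] powr_minus field_simps)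
  finally show ?thesis .
qed

lemma nn_integral_finite_has_integral:
  fixes F :: "real \<Rightarrow> real" and S :: "real set"
  assumes m: "(\<lambda>x. indicator S x * F x) \<in> borel_measurable borel" and nn: "\<And>x. x \<in> S \<Longrightarrow> F x \<ge> 0"
    and fin: "(\<integral>\<^sup>+x. ennreal (indicator S x * F x) \<partial>lborel) < \<infinity>"
  shows "F absolutely_integrable_on S \<and> (F has_integral integral S F) S \<and>
         (\<integral>\<^sup>+x. ennreal (indicator S x * F x) \<partial>lborel) = ennreal (integral S F)"
proof -
  have nn': "\<And>x. 0 \<le> indicator S x * F x" using nn by (simp add: indicator_def)
  have i: "(\<lambda>x. indicator S x * F x) integrable_on UNIV"
    using nn_integral_integrable_on[OF m nn' fin] .
  have eqf: "(\<lambda>x. indicator S x * F x) = (\<lambda>x. if x \<in> S then F x else 0)"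
    by (auto simp: indicator_def fun_eq_iff)
  have iS: "F integrable_on S" using i unfolding eqf integrable_restrict_UNIV .
  have e: "(\<integral>\<^sup>+x. ennreal (indicator S x * F x) \<partial>lborel) = integral UNIV (\<lambda>x. indicator S x * F x)"
    using nn_integral_lborel_eq_integral[OF m nn' fin] .
  have "integral UNIV (\<lambda>x. indicator S x * F x) = integral S F"
    unfolding eqf integral_restrict_UNIV ..
  then show ?thesis using iS e nn absolutely_integrable_on_iff_nonneg by auto
qed

lemma nn_integral_change_of_variables_1:
  fixes f g g' :: "real \<Rightarrow> real" and S :: "real set"
  assumes S: "S \<in> sets lebesgue"
    and der: "\<And>x. x \<in> S \<Longrightarrow> (g has_field_derivative g' x) (at x within S)"
    and inj: "inj_on g S"
    and nn: "\<And>y. y \<in> g ` S \<Longrightarrow> f y \<ge> 0"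
    and m1: "(\<lambda>x. indicator S x * (\<bar>g' x\<bar> * f (g x))) \<in> borel_measurable borel"
    and m2: "(\<lambda>y. indicator (g ` S) y * f y) \<in> borel_measurable borel"
  shows "(\<integral>\<^sup>+x. ennreal (indicator S x * (\<bar>g' x\<bar> * f (g x))) \<partial>lborel)
       = (\<integral>\<^sup>+y. ennreal (indicator (g ` S) y * f y) \<partial>lborel)"
proof -
  (* the change of variables formula for absolute integrals applies as soon as one side is finite *)
  note cv = has_absolute_integral_change_of_variables_1'[OF S der inj]
  have nn1: "\<And>x. x \<in> S \<Longrightarrow> \<bar>g' x\<bar> * f (g x) \<ge> 0" using nn by auto
  show ?thesis
  proof (cases "(\<integral>\<^sup>+y. ennreal (indicator (g ` S) y * f y) \<partial>lborel) < \<infinity>")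
    case True
    note A = nn_integral_finite_has_integral[OF m2 nn True]
    hence "(\<lambda>x. \<bar>g' x\<bar> * f (g x)) absolutely_integrable_on S \<and> integral S (\<lambda>x. \<bar>g' x\<bar> * f (g x)) = integral (g ` S) f"
      using cv by blast
    hence "((\<lambda>x. \<bar>g' x\<bar> * f (g x)) has_integral integral (g ` S) f) S"
      using set_lebesgue_integral_eq_integral(1) by (metis absolutely_integrable_on_def has_integral_integrable_integral)
    from nn_integral_has_integral_lebesgue[OF nn1 this] A show ?thesis
      by (simp add: ennreal_mult'')
  next
    case False
    show ?thesis
    proof (cases "(\<integral>\<^sup>+x. ennreal (indicator S x * (\<bar>g' x\<bar> * f (g x))) \<partial>lborel) < \<infinity>")
      case True
      note A = nn_integral_finite_has_integral[OF m1 nn1 True]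
      hence "f absolutely_integrable_on g ` S \<and> integral (g ` S) f = integral S (\<lambda>x. \<bar>g' x\<bar> * f (g x))"
        using cv by blast
      hence "(f has_integral integral S (\<lambda>x. \<bar>g' x\<bar> * f (g x))) (g ` S)"
        by (metis absolutely_integrable_on_def has_integral_integrable_integral)
      from nn_integral_has_integral_lebesgue[OF nn this] A False show ?thesis
        by simp
    next
      case False2: False
      have "\<not> (\<integral>\<^sup>+x. ennreal (indicator S x * (\<bar>g' x\<bar> * f (g x))) \<partial>lborel) < \<top>" using False2 by simp
      with False show ?thesis by (simp add: not_less top.extremum_unique)
    qed
  qed
qed

lemma nn_integral_gaussian: "(\<integral>\<^sup>+y. ennreal (exp (- y\<^sup>2)) \<partial>lborel) = ennreal (sqrt pi)"
proof -
  have "has_bochner_integral lborel (\<lambda>x::real. exp (-x\<^sup>2) * x^(2 * 0)) (sqrt pi * (fact (2 * 0) / (2 ^ (2 * 0) * fact 0)))"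
    using has_bochner_integral_even_function[OF gaussian_moment_even_pos[where k=0]] by simp
  hence "has_bochner_integral lborel (\<lambda>x::real. exp (-x\<^sup>2)) (sqrt pi)" by simp
  thus ?thesis by (subst nn_integral_eq_integral) (auto simp: has_bochner_integral_iff)
qed

lemma bij_betw_minus_inverse:
  fixes c :: real assumes c: "c > 0"
  shows "bij_betw (\<lambda>x. x - c / x) {0<..} UNIV"
proof (rule bij_betwI')
  fix r s :: real assume rs: "r \<in> {0<..}" "s \<in> {0<..}"
  have "strict_mono_on {0<..} (\<lambda>x. x - c / x)"
  proof (rule strict_mono_onI)
    fix r s :: real assume "r \<in> {0<..}" "s \<in> {0<..}" "r < s"
    hence "c / s < c / r" using c by (simp add: divide_strict_left_mono)
    thus "r - c / r < s - c / s" using \<open>r < s\<close> by simp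
  qed
  thus "(r - c / r = s - c / s) = (r = s)"
    using rs strict_mono_on_eqD by metis
next
  fix y :: real
  define s where "s = sqrt (y\<^sup>2 + 4 * c)"
  have s2: "s\<^sup>2 = y\<^sup>2 + 4 * c" using c by (simp add: s_def)
  have "sqrt (y\<^sup>2) < s" using c by (simp add: s_def del: real_sqrt_abs)
  hence "s > \<bar>y\<bar>" by simp
  define x where "x = (y + s) / 2"
  have x0: "x > 0" using \<open>s > \<bar>y\<bar>\<close> by (simp add: x_def)
  have "x * x - y * x = c" unfolding x_def using s2 by (simp add: field_simps power2_eq_square)
  hence "y = x - c / x" using x0 by (simp add: field_simps)
  thus "\<exists>x\<in>{0<..}. y = x - c / x" using x0 by blast
qed simp

lemma nn_integral_inversion:
  fixes f :: "real \<Rightarrow> real" assumes c: "c > 0" and [measurable]: "f \<in> borel_measurable borel"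
    and f0: "\<And>x. x > 0 \<Longrightarrow> f x \<ge> 0"
  shows "(\<integral>\<^sup>+x. ennreal (indicator {0<..} x * (c / x\<^sup>2 * f (c / x))) \<partial>lborel)
       = (\<integral>\<^sup>+x. ennreal (indicator {0<..} x * f x) \<partial>lborel)"
proof -
  have bij: "bij_betw (\<lambda>x. c / x) {0<..} {0<..}"
    using c by (intro bij_betwI[where g="\<lambda>x. c / x"]) auto
  have der: "((\<lambda>x. c / x) has_field_derivative (- c / x\<^sup>2)) (at x within {0<..})" if "x \<in> {0<..}" for x
    using that by (auto intro!: derivative_eq_intros simp: field_simps power2_eq_square)
  have "(\<integral>\<^sup>+x. ennreal (indicator {0<..} x * (\<bar>- c / x\<^sup>2\<bar> * f (c / x))) \<partial>lborel)
      = (\<integral>\<^sup>+x. ennreal (indicator ((\<lambda>x. c / x) ` {0<..}) x * f x) \<partial>lborel)"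
    using bij_betw_imp_surj_on[OF bij] f0
    by (intro nn_integral_change_of_variables_1[OF _ der bij_betw_imp_inj_on[OF bij]]) auto
  thus ?thesis using c bij_betw_imp_surj_on[OF bij] by simp
qed

lemma nn_integral_cauchy_schloemilch:
  fixes c :: real assumes c: "c > 0"
  shows "(\<integral>\<^sup>+x. ennreal (indicator {0<..} x * exp (- (x - c / x)\<^sup>2)) \<partial>lborel) = ennreal (sqrt pi / 2)"
proof -
  (* Cauchy-Schloemilch: y = x - c / x maps {0<..} onto the line with dy = (1 + c / x^2) dx,
     and the substitution x = c / x' shows that the c / x^2 part is the integral itself *)
  let ?S = "{0<..} :: real set"
  let ?E = "\<lambda>x::real. exp (- (x - c / x)\<^sup>2)"
  note bij = bij_betw_minus_inverse[OF c]
  have der: "((\<lambda>x. x - c / x) has_field_derivative (1 + c / x\<^sup>2)) (at x within ?S)" if "x \<in> ?S" for x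
    using that by (auto intro!: derivative_eq_intros simp: field_simps power2_eq_square)
  have whole: "(\<integral>\<^sup>+x. ennreal (indicator ?S x * (\<bar>1 + c / x\<^sup>2\<bar> * ?E x)) \<partial>lborel) = ennreal (sqrt pi)"
    using nn_integral_change_of_variables_1[OF _ der bij_betw_imp_inj_on[OF bij], of "\<lambda>y. exp (- y\<^sup>2)"]
      bij_betw_imp_surj_on[OF bij] nn_integral_gaussian by simp
  have E_inv: "?E (c / x) = ?E x" if "x > 0" for x
    using that power2_commute[of "c / x" x] c by simp
  have "(\<integral>\<^sup>+x. ennreal (indicator ?S x * (c / x\<^sup>2 * ?E x)) \<partial>lborel)
      = (\<integral>\<^sup>+x. ennreal (indicator ?S x * (c / x\<^sup>2 * ?E (c / x))) \<partial>lborel)"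
    by (intro nn_integral_cong) (metis E_inv greaterThan_iff indicator_simps(2) mult_zero_left)
  also have "\<dots> = (\<integral>\<^sup>+x. ennreal (indicator ?S x * ?E x) \<partial>lborel)"
    by (rule nn_integral_inversion[OF c]) auto
  finally have half: "(\<integral>\<^sup>+x. ennreal (indicator ?S x * (c / x\<^sup>2 * ?E x)) \<partial>lborel)
      = (\<integral>\<^sup>+x. ennreal (indicator ?S x * ?E x) \<partial>lborel)" .
  have "(\<integral>\<^sup>+x. ennreal (indicator ?S x * (\<bar>1 + c / x\<^sup>2\<bar> * ?E x)) \<partial>lborel)
      = (\<integral>\<^sup>+x. ennreal (indicator ?S x * ?E x) + ennreal (indicator ?S x * (c / x\<^sup>2 * ?E x)) \<partial>lborel)"
    using c by (intro nn_integral_cong)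
      (auto simp: indicator_def ennreal_plus[symmetric] ring_distribs simp del: ennreal_plus)
  also have "\<dots> = 2 * (\<integral>\<^sup>+x. ennreal (indicator ?S x * ?E x) \<partial>lborel)"
    using half by (subst nn_integral_add) (auto simp: mult_2)
  finally have "2 * (\<integral>\<^sup>+x. ennreal (indicator ?S x * ?E x) \<partial>lborel) = 2 * ennreal (sqrt pi / 2)"
    using whole ennreal_mult[of 2 "sqrt pi / 2"] by simp
  thus ?thesis using ennreal_mult_cancel_left[of 2] by simp
qed

lemma nn_integral_exp_inverse_square:
  fixes c :: real assumes c: "c \<ge> 0"
  shows "(\<integral>\<^sup>+x. ennreal (indicator {0<..} x * exp (- x\<^sup>2 - c\<^sup>2 / x\<^sup>2)) \<partial>lborel) = ennreal (sqrt pi / 2 * exp (- 2 * c))"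
proof (cases "c = 0")
  case True
  have "(\<integral>\<^sup>+x. ennreal (indicator {0<..} x * exp (- x\<^sup>2 - c\<^sup>2 / x\<^sup>2)) \<partial>lborel)
      = (\<integral>\<^sup>+x. ennreal (indicator {0..} x *\<^sub>R exp (- x\<^sup>2)) \<partial>lborel)"
  proof (rule nn_integral_cong_AE)
    show "AE x in lborel. ennreal (indicator {0<..} x * exp (- x\<^sup>2 - c\<^sup>2 / x\<^sup>2)) = ennreal (indicator {0..} x *\<^sub>R exp (- x\<^sup>2))"
      using AE_lborel_singleton[of 0] by eventually_elim (auto simp: True indicator_def)
  qed
  also have "\<dots> = ennreal (sqrt pi / 2)"
    using gaussian_moment_0 by (subst nn_integral_eq_integral) (auto simp: has_bochner_integral_iff)
  finally show ?thesis using True by simp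
next
  case False
  hence c0: "c > 0" using c by simp
  have "(\<integral>\<^sup>+x. ennreal (indicator {0<..} x * exp (- x\<^sup>2 - c\<^sup>2 / x\<^sup>2)) \<partial>lborel)
      = (\<integral>\<^sup>+x. ennreal (exp (- 2 * c)) * ennreal (indicator {0<..} x * exp (- (x - c / x)\<^sup>2)) \<partial>lborel)"
  proof (rule nn_integral_cong)
    fix x :: real
    show "ennreal (indicator {0<..} x * exp (- x\<^sup>2 - c\<^sup>2 / x\<^sup>2)) = ennreal (exp (- 2 * c)) * ennreal (indicator {0<..} x * exp (- (x - c / x)\<^sup>2))"
    proof (cases "x > 0")
      case True
      have "- x\<^sup>2 - c\<^sup>2 / x\<^sup>2 = - 2 * c + - (x - c / x)\<^sup>2"
        using True by (simp add: power2_eq_square field_simps)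
      hence "exp (- x\<^sup>2 - c\<^sup>2 / x\<^sup>2) = exp (- 2 * c) * exp (- (x - c / x)\<^sup>2)"
        by (simp add: exp_add[symmetric])
      thus ?thesis using True by (simp add: ennreal_mult[symmetric])
    qed simp
  qed
  also have "\<dots> = ennreal (exp (- 2 * c)) * ennreal (sqrt pi / 2)"
    by (subst nn_integral_cmult) (auto simp: nn_integral_cauchy_schloemilch[OF c0])
  finally show ?thesis by (simp add: ennreal_mult[symmetric] mult.commute)
qed

(* the density of the Levy distribution (one-sided stable law of index 1/2) with scale tau^2 / 2 *)
definition levy_density :: "real \<Rightarrow> real \<Rightarrow> real" where
  "levy_density \<tau> \<sigma> = indicator {0<..} \<sigma> * (\<tau> / (2 * sqrt pi) / (\<sigma> * sqrt \<sigma>) * exp (- \<tau>\<^sup>2 / (4 * \<sigma>)))"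

lemma levy_density_measurable[measurable]:
  assumes [measurable]: "f \<in> borel_measurable M" "g \<in> borel_measurable M"
  shows "(\<lambda>x. levy_density (f x) (g x)) \<in> borel_measurable M"
  unfolding levy_density_def by measurable

lemma levy_density_eq_0: "\<sigma> \<le> 0 \<Longrightarrow> levy_density \<tau> \<sigma> = 0"
  by (simp add: levy_density_def)

lemma bij_betw_inverse_square:
  fixes \<tau> :: real assumes \<tau>: "\<tau> > 0"
  shows "bij_betw (\<lambda>x. \<tau>\<^sup>2 / (4 * x\<^sup>2)) {0<..} {0<..}"
proof (rule bij_betwI[where g="\<lambda>y. \<tau> / (2 * sqrt y)"])
  show "(\<lambda>x. \<tau>\<^sup>2 / (4 * x\<^sup>2)) \<in> {0<..} \<rightarrow> {0<..}" "(\<lambda>y. \<tau> / (2 * sqrt y)) \<in> {0<..} \<rightarrow> {0<..}"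
    using \<tau> by auto
  show "\<tau> / (2 * sqrt (\<tau>\<^sup>2 / (4 * x\<^sup>2))) = x" if "x \<in> {0<..}" for x
    using that \<tau> by (simp add: real_sqrt_divide real_sqrt_mult)
  show "\<tau>\<^sup>2 / (4 * (\<tau> / (2 * sqrt y))\<^sup>2) = y" if "y \<in> {0<..}" for y
    using that \<tau> by (simp add: power_divide power_mult_distrib)
qed

lemma nn_integral_levy_density_exp:
  fixes \<tau> r :: real assumes \<tau>: "\<tau> > 0" and r: "r \<ge> 0"
  shows "(\<integral>\<^sup>+\<sigma>. ennreal (levy_density \<tau> \<sigma> * exp (- \<sigma> * r\<^sup>2)) \<partial>lborel) = ennreal (exp (- \<tau> * r))"
proof -
  let ?S = "{0<..} :: real set"
  let ?f = "\<lambda>\<sigma>. levy_density \<tau> \<sigma> * exp (- \<sigma> * r\<^sup>2)"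
  let ?g = "\<lambda>x. \<tau>\<^sup>2 / (4 * x\<^sup>2)"
  let ?g' = "\<lambda>x. - \<tau>\<^sup>2 / (2 * x ^ 3)"
  define c where "c = \<tau> * r / 2"
  have c: "c \<ge> 0" using \<tau> r by (simp add: c_def)
  note bij = bij_betw_inverse_square[OF \<tau>]
  have der: "(?g has_field_derivative ?g' x) (at x within ?S)" if "x \<in> ?S" for x
    using that by (auto intro!: derivative_eq_intros simp: field_simps power2_eq_square power3_eq_cube)
  have key: "indicator ?S x * (\<bar>?g' x\<bar> * ?f (?g x))
      = 2 / sqrt pi * (indicator ?S x * exp (- x\<^sup>2 - c\<^sup>2 / x\<^sup>2))" for x
  proof (cases "x > 0")
    case True
    have g0: "?g x > 0" using True \<tau> by simp
    have sq: "sqrt (?g x) = \<tau> / (2 * x)"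
      using True \<tau> by (simp add: real_sqrt_divide real_sqrt_mult)
    have e1: "- \<tau>\<^sup>2 / (4 * ?g x) = - x\<^sup>2" using True \<tau> by (simp add: field_simps)
    have e2: "- ?g x * r\<^sup>2 = - c\<^sup>2 / x\<^sup>2" using True \<tau> by (simp add: c_def field_simps power_mult_distrib)
    have e3: "\<bar>?g' x\<bar> * (\<tau> / (2 * sqrt pi) / (?g x * sqrt (?g x))) = 2 / sqrt pi"
      unfolding sq using True \<tau> by (simp add: field_simps power2_eq_square power3_eq_cube)
    have "\<bar>?g' x\<bar> * ?f (?g x) = (\<bar>?g' x\<bar> * (\<tau> / (2 * sqrt pi) / (?g x * sqrt (?g x))))
        * exp (- \<tau>\<^sup>2 / (4 * ?g x)) * exp (- ?g x * r\<^sup>2)"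
      using g0 unfolding levy_density_def by (simp only: greaterThan_iff indicator_simps mult_1 mult.assoc)
    also have "\<dots> = 2 / sqrt pi * exp (- x\<^sup>2 - c\<^sup>2 / x\<^sup>2)"
      unfolding e1 e2 e3 by (simp add: exp_diff exp_minus field_simps)
    finally show ?thesis using True by simp
  qed simp
  have "(\<integral>\<^sup>+\<sigma>. ennreal (?f \<sigma>) \<partial>lborel) = (\<integral>\<^sup>+\<sigma>. ennreal (indicator ?S \<sigma> * ?f \<sigma>) \<partial>lborel)"
    by (intro nn_integral_cong) (simp add: levy_density_def indicator_def)
  also have "\<dots> = (\<integral>\<^sup>+x. ennreal (indicator ?S x * (\<bar>?g' x\<bar> * ?f (?g x))) \<partial>lborel)"
    using bij_betw_imp_surj_on[OF bij] \<tau>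
    by (subst nn_integral_change_of_variables_1[OF _ der bij_betw_imp_inj_on[OF bij]])
      (auto simp: levy_density_def)
  also have "\<dots> = (\<integral>\<^sup>+x. ennreal (2 / sqrt pi) * ennreal (indicator ?S x * exp (- x\<^sup>2 - c\<^sup>2 / x\<^sup>2)) \<partial>lborel)"
    unfolding key by (intro nn_integral_cong) (simp add: ennreal_mult[symmetric])
  also have "\<dots> = ennreal (2 / sqrt pi) * ennreal (sqrt pi / 2 * exp (- 2 * c))"
    by (subst nn_integral_cmult) (auto simp: nn_integral_exp_inverse_square[OF c])
  also have "\<dots> = ennreal (exp (- \<tau> * r))"
    by (simp add: ennreal_mult[symmetric] c_def)
  finally show ?thesis .
qed

lemma nn_integral_laplace_eq_gaussian_mixture:
  fixes M :: "'w measure" and W :: "'w \<Rightarrow> ennreal" and S :: "'w \<Rightarrow> real"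
  assumes [measurable]: "W \<in> borel_measurable M" "S \<in> borel_measurable M"
    and S_pos: "\<And>\<omega>. \<omega> \<in> space M \<Longrightarrow> W \<omega> \<noteq> 0 \<Longrightarrow> S \<omega> > 0" and r: "r \<ge> 0"
  shows "(\<integral>\<^sup>+\<omega>. W \<omega> * ennreal (exp (- S \<omega> * r)) \<partial>M)
       = (\<integral>\<^sup>+(\<omega>, \<sigma>). W \<omega> * ennreal (levy_density (S \<omega>) \<sigma>) * ennreal (exp (- \<sigma> * r\<^sup>2)) \<partial>(M \<Otimes>\<^sub>M lborel))"
proof -
  have "(\<integral>\<^sup>+(\<omega>, \<sigma>). W \<omega> * ennreal (levy_density (S \<omega>) \<sigma>) * ennreal (exp (- \<sigma> * r\<^sup>2)) \<partial>(M \<Otimes>\<^sub>M lborel))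
      = (\<integral>\<^sup>+\<omega>. W \<omega> * (\<integral>\<^sup>+\<sigma>. ennreal (levy_density (S \<omega>) \<sigma> * exp (- \<sigma> * r\<^sup>2)) \<partial>lborel) \<partial>M)"
    by (subst lborel.nn_integral_fst[symmetric])
      (auto simp: mult.assoc ennreal_mult'' intro!: nn_integral_cong nn_integral_cmult)
  also have "\<dots> = (\<integral>\<^sup>+\<omega>. W \<omega> * ennreal (exp (- S \<omega> * r)) \<partial>M)"
  proof (intro nn_integral_cong)
    fix \<omega> assume "\<omega> \<in> space M"
    thus "W \<omega> * (\<integral>\<^sup>+\<sigma>. ennreal (levy_density (S \<omega>) \<sigma> * exp (- \<sigma> * r\<^sup>2)) \<partial>lborel)
        = W \<omega> * ennreal (exp (- S \<omega> * r))"
      using S_pos[of \<omega>] nn_integral_levy_density_exp[OF _ r] by (cases "W \<omega> = 0") auto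
  qed
  finally show ?thesis ..
qed

section \<open>The logarithmic symbols\<close>

lemma ln_powr_laplace_mixture:
  fixes \<gamma> r :: real assumes \<gamma>: "\<gamma> > 0" and r: "r \<ge> 0"
  shows "ennreal (ln (exp 1 + r) powr (- \<gamma>))
       = (\<integral>\<^sup>+(u, \<tau>). ennreal (gamma_kernel \<gamma> 0 u) * ennreal (gamma_kernel u (exp 1) \<tau>) * ennreal (exp (- \<tau> * r))
            \<partial>(lborel \<Otimes>\<^sub>M lborel))"
proof -
  (* with L = ln (e + r): L powr - gamma is the integral of gamma_kernel gamma 0 u * exp (- L u),
     and exp (- L u) = (e + r) powr - u is the integral of gamma_kernel u e tau * exp (- r tau) *)
  define L where "L = ln (exp 1 + r)"
  have er: "exp 1 + r > 1" using r exp_gt_one[of "1::real"] by linarith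
  hence L0: "L > 0" unfolding L_def by simp
  have inner: "ennreal (gamma_kernel \<gamma> 0 u) * (\<integral>\<^sup>+\<tau>. ennreal (gamma_kernel u (exp 1) \<tau>) * ennreal (exp (- \<tau> * r)) \<partial>lborel)
      = ennreal (gamma_kernel \<gamma> L u)" for u
  proof (cases "u > 0")
    case True
    have "(\<integral>\<^sup>+\<tau>. ennreal (gamma_kernel u (exp 1) \<tau>) * ennreal (exp (- \<tau> * r)) \<partial>lborel)
        = (\<integral>\<^sup>+\<tau>. ennreal (gamma_kernel u (exp 1 + r) \<tau>) \<partial>lborel)"
      by (intro nn_integral_cong)
        (simp add: ennreal_mult''[symmetric] gamma_kernel_mult_exp[symmetric] mult.commute[of _ r])
    also have "\<dots> = ennreal (exp (- L * u))"
      using nn_integral_gamma_kernel[OF True] er by (simp add: powr_def L_def)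
    finally have "ennreal (gamma_kernel \<gamma> 0 u) * (\<integral>\<^sup>+\<tau>. ennreal (gamma_kernel u (exp 1) \<tau>) * ennreal (exp (- \<tau> * r)) \<partial>lborel)
        = ennreal (gamma_kernel \<gamma> 0 u * exp (- L * u))"
      by (simp add: ennreal_mult'')
    also have "gamma_kernel \<gamma> 0 u * exp (- L * u) = gamma_kernel \<gamma> L u"
      using gamma_kernel_mult_exp[of \<gamma> 0 u L] by simp
    finally show ?thesis .
  qed (simp add: gamma_kernel_eq_0)
  have "(\<integral>\<^sup>+(u, \<tau>). ennreal (gamma_kernel \<gamma> 0 u) * ennreal (gamma_kernel u (exp 1) \<tau>) * ennreal (exp (- \<tau> * r))
          \<partial>(lborel \<Otimes>\<^sub>M lborel))
      = (\<integral>\<^sup>+u. ennreal (gamma_kernel \<gamma> 0 u) * (\<integral>\<^sup>+\<tau>. ennreal (gamma_kernel u (exp 1) \<tau>) * ennreal (exp (- \<tau> * r)) \<partial>lborel) \<partial>lborel)"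
    by (subst lborel.nn_integral_fst[symmetric]) (auto simp: mult.assoc intro!: nn_integral_cong nn_integral_cmult)
  also have "\<dots> = ennreal (L powr (- \<gamma>))"
    unfolding inner by (rule nn_integral_gamma_kernel[OF \<gamma> L0])
  finally show ?thesis unfolding L_def ..
qed

definition log_lap_mixing_density :: "real \<Rightarrow> real \<times> real \<Rightarrow> ennreal" where
  "log_lap_mixing_density \<gamma> = (\<lambda>(u, \<tau>). ennreal (gamma_kernel \<gamma> 0 u) * ennreal (gamma_kernel u (exp 1) \<tau>))"

definition log_grad_mixing_density :: "real \<Rightarrow> (real \<times> real) \<times> real \<Rightarrow> ennreal" where
  "log_grad_mixing_density \<gamma> = (\<lambda>(\<omega>, \<sigma>). log_lap_mixing_density \<gamma> \<omega> * ennreal (levy_density (snd \<omega>) \<sigma>))"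

lemma log_lap_mixing_density_measurable[measurable]:
  "log_lap_mixing_density \<gamma> \<in> borel_measurable (lborel \<Otimes>\<^sub>M lborel)"
  unfolding log_lap_mixing_density_def by measurable

lemma log_grad_mixing_density_measurable[measurable]:
  "log_grad_mixing_density \<gamma> \<in> borel_measurable ((lborel \<Otimes>\<^sub>M lborel) \<Otimes>\<^sub>M lborel)"
  unfolding log_grad_mixing_density_def by measurable

lemma log_lap_mixing_density_pos: "log_lap_mixing_density \<gamma> \<omega> \<noteq> 0 \<Longrightarrow> snd \<omega> > 0"
  using gamma_kernel_eq_0[of "snd \<omega>"] by (force simp: log_lap_mixing_density_def split: prod.splits)

lemma log_grad_mixing_density_pos: "log_grad_mixing_density \<gamma> \<omega> \<noteq> 0 \<Longrightarrow> snd \<omega> > 0"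
  using levy_density_eq_0[of "snd \<omega>"] by (cases \<omega>) (force simp: log_grad_mixing_density_def)

lemma log_lap_symbol_gaussian_mixture:
  assumes "\<gamma> > 0"
  shows "ennreal (log_lap_symbol \<gamma> k)
       = (\<integral>\<^sup>+\<omega>. log_lap_mixing_density \<gamma> \<omega> * ennreal (exp (- snd \<omega> * (norm k)\<^sup>2)) \<partial>(lborel \<Otimes>\<^sub>M lborel))"
  unfolding log_lap_symbol_def using assms
  by (subst ln_powr_laplace_mixture) (auto simp: log_lap_mixing_density_def split_beta')

lemma log_grad_symbol_gaussian_mixture:
  assumes "\<gamma> > 0"
  shows "ennreal (log_grad_symbol \<gamma> k)
       = (\<integral>\<^sup>+\<omega>. log_grad_mixing_density \<gamma> \<omega> * ennreal (exp (- snd \<omega> * (norm k)\<^sup>2))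
            \<partial>((lborel \<Otimes>\<^sub>M lborel) \<Otimes>\<^sub>M lborel))"
proof -
  have "ennreal (log_grad_symbol \<gamma> k)
      = (\<integral>\<^sup>+\<omega>. log_lap_mixing_density \<gamma> \<omega> * ennreal (exp (- snd \<omega> * norm k)) \<partial>(lborel \<Otimes>\<^sub>M lborel))"
    unfolding log_grad_symbol_def using assms
    by (subst ln_powr_laplace_mixture) (auto simp: log_lap_mixing_density_def split_beta')
  also have "\<dots> = (\<integral>\<^sup>+(\<omega>, \<sigma>). log_lap_mixing_density \<gamma> \<omega> * ennreal (levy_density (snd \<omega>) \<sigma>)
      * ennreal (exp (- \<sigma> * (norm k)\<^sup>2)) \<partial>((lborel \<Otimes>\<^sub>M lborel) \<Otimes>\<^sub>M lborel))"
    using log_lap_mixing_density_pos by (intro nn_integral_laplace_eq_gaussian_mixture) auto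
  finally show ?thesis by (simp add: log_grad_mixing_density_def split_beta')
qed

theorem lemma8p2:
  fixes \<gamma> :: real and f :: "real^2 \<Rightarrow> complex" and p :: ennreal
  assumes "\<gamma> > 0" and "Cc_inf2 f" and "1 \<le> p"
  shows "Lp_norm2 p (fourier_multiplier2 (log_lap_symbol \<gamma>) f) \<le> Lp_norm2 p f
       \<and> Lp_norm2 p (fourier_multiplier2 (log_grad_symbol \<gamma>) f) \<le> Lp_norm2 p f"
proof
  have cont: "continuous_on UNIV f"
    using assms(2) unfolding Cc_inf2_def smooth2_def by (metis Ck2.simps(1))
  have cpt: "compact (closure {x. f x \<noteq> 0})"
    using assms(2) unfolding Cc_inf2_def by blast
  show "Lp_norm2 p (fourier_multiplier2 (log_lap_symbol \<gamma>) f) \<le> Lp_norm2 p f"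
    using log_lap_mixing_density_pos
    by (intro Lp_norm2_fourier_multiplier2_le_mixture[OF _ _ _ _ _
          log_lap_symbol_gaussian_mixture[OF assms(1)] cont cpt assms(3)])
      (auto simp: log_lap_symbol_def)
  show "Lp_norm2 p (fourier_multiplier2 (log_grad_symbol \<gamma>) f) \<le> Lp_norm2 p f"
    using log_grad_mixing_density_pos
    by (intro Lp_norm2_fourier_multiplier2_le_mixture[OF _ _ _ _ _
          log_grad_symbol_gaussian_mixture[OF assms(1)] cont cpt assms(3)])
      (auto simp: log_grad_symbol_def)
qed

end
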